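(* Let $X$ be one of the sequence spaces $\ell^p$ ($1\le p\le\infty$), $c$, or $c_0$. Let $a=(a_n)\in\ell^\infty$ with $a_n>0$ for all $n\in\mathbb{N}$, and let $b=(b_n)\in X$. Suppose there exists $k\in X^*$ such that the spectrum of $T_k:=A+bk$ satisfies $\Sigma(T_k)\subseteq H:=\{z\in\mathbb{C}\mid \operatorname{re}(z)\le 0\}$. Then: 1. $(a_n)\in c_0$, and $a_n\neq a_m$ whenever $n\neq m$; 2. $b_n\neq 0$ for all $n\in\mathbb{N}$.
   Context: Sequences are complex valued; $\ell^p$ carries the $\ell^p$-norm, $c$ (convergent sequences) and $c_0$ (null sequences) carry the sup norm. $A:X\to X$ is the diagonal operator $(x_n)\mapsto(a_nx_n)$. For $k\in X^*$, $T_k:X\to X$ is the bounded operator $x\mapsto Ax+(kx)\,b$. $\Sigma(\cdot)$ denotes the spectrum. *)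

theory Defs
  imports "HOL-Analysis.Analysis"
begin

text \<open>The four kinds of sequence
spaces: ell^p for a real exponent p (meaningful for p >= 1), ell^infinity,
c (convergent sequences) and c_0 (null sequences).\<close>

datatype seqspace = Ell real | Ell_inf | Conv | Null

definition valid_space :: "seqspace \<Rightarrow> bool" where
  "valid_space X = (case X of Ell p \<Rightarrow> 1 \<le> p | _ \<Rightarrow> True)"

definition carrier_sp :: "seqspace \<Rightarrow> (nat \<Rightarrow> complex) set" where
  "carrier_sp X = (case X of
      Ell p \<Rightarrow> {x. summable (\<lambda>n. cmod (x n) powr p)}
    | Ell_inf \<Rightarrow> {x. bounded (range x)}
    | Conv \<Rightarrow> {x. convergent x}
    | Null \<Rightarrow> {x. x \<longlonglongrightarrow> 0})"

definition norm_sp :: "seqspace \<Rightarrow> (nat \<Rightarrow> complex) \<Rightarrow> real" where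
  "norm_sp X x = (case X of
      Ell p \<Rightarrow> (\<Sum>n. cmod (x n) powr p) powr (1 / p)
    | _ \<Rightarrow> (SUP n. cmod (x n)))"

definition bounded_functional :: "seqspace \<Rightarrow> ((nat \<Rightarrow> complex) \<Rightarrow> complex) \<Rightarrow> bool" where
  "bounded_functional X k \<longleftrightarrow>
     (\<forall>x\<in>carrier_sp X. \<forall>y\<in>carrier_sp X. k (\<lambda>n. x n + y n) = k x + k y) \<and>
     (\<forall>x\<in>carrier_sp X. \<forall>c. k (\<lambda>n. c * x n) = c * k x) \<and>
     (\<exists>M. \<forall>x\<in>carrier_sp X. cmod (k x) \<le> M * norm_sp X x)"

definition bounded_op :: "seqspace \<Rightarrow> ((nat \<Rightarrow> complex) \<Rightarrow> (nat \<Rightarrow> complex)) \<Rightarrow> bool" where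
  "bounded_op X T \<longleftrightarrow>
     (\<forall>x\<in>carrier_sp X. T x \<in> carrier_sp X) \<and>
     (\<forall>x\<in>carrier_sp X. \<forall>y\<in>carrier_sp X. T (\<lambda>n. x n + y n) = (\<lambda>n. T x n + T y n)) \<and>
     (\<forall>x\<in>carrier_sp X. \<forall>c. T (\<lambda>n. c * x n) = (\<lambda>n. c * T x n)) \<and>
     (\<exists>M. \<forall>x\<in>carrier_sp X. norm_sp X (T x) \<le> M * norm_sp X x)"

definition spectrum_op :: "seqspace \<Rightarrow> ((nat \<Rightarrow> complex) \<Rightarrow> (nat \<Rightarrow> complex)) \<Rightarrow> complex set" where
  "spectrum_op X T = {z. \<not> (\<exists>S. bounded_op X S \<and>
       (\<forall>x\<in>carrier_sp X. S (\<lambda>n. T x n - z * x n) = x) \<and>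
       (\<forall>x\<in>carrier_sp X. (\<lambda>n. T (S x) n - z * S x n) = x))}"

definition diag_op :: "(nat \<Rightarrow> real) \<Rightarrow> (nat \<Rightarrow> complex) \<Rightarrow> (nat \<Rightarrow> complex)" where
  "diag_op a x = (\<lambda>n. complex_of_real (a n) * x n)"

definition T_op :: "(nat \<Rightarrow> real) \<Rightarrow> (nat \<Rightarrow> complex) \<Rightarrow> ((nat \<Rightarrow> complex) \<Rightarrow> complex)
                    \<Rightarrow> (nat \<Rightarrow> complex) \<Rightarrow> (nat \<Rightarrow> complex)" where
  "T_op a b k x = (\<lambda>n. diag_op a x n + k x * b n)"

end

theory Submission
  imports Defs
begin

text \<open>For \<open>Re z > 0\<close> the operator \<open>T\<^sub>k - z\<close> is bijective with a bounded inverse. Since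
\<open>k\<close> has codimension-one kernel, every pair of coordinates \<open>n \<noteq> m\<close> supports a nonzero \<open>y\<close>
with \<open>k y = 0\<close>, on which \<open>T\<^sub>k\<close> acts diagonally. If \<open>a\<^sub>n = a\<^sub>m\<close>, such a \<open>y\<close> is an eigenvector
for \<open>a\<^sub>n > 0\<close>; if \<open>a\<close> does not tend to \<open>0\<close>, it has a limit point \<open>l > 0\<close>, and choosing
\<open>a\<^sub>n, a\<^sub>m\<close> close to \<open>l\<close> makes \<open>y\<close> an approximate eigenvector, contradicting boundedness
of the resolvent. Finally if \<open>b\<^sub>n = 0\<close> the \<open>n\<close>-th coordinate of \<open>(T\<^sub>k - a\<^sub>n) x\<close> vanishes
for every \<open>x\<close>, so the unit vector \<open>e\<^sub>n\<close> is not in its range.\<close>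

lemma carrier_sp_finite_support:
  assumes "finite F" and "\<forall>j. j \<notin> F \<longrightarrow> x j = 0"
  shows "x \<in> carrier_sp X"
proof -
  have null: "x \<longlonglongrightarrow> 0"
  proof (rule tendsto_eventually)
    obtain N where "\<forall>j\<in>F. j < N" using \<open>finite F\<close> finite_nat_bounded by blast
    then have "\<forall>j\<ge>N. x j = 0" using assms(2) by (meson not_less)
    then show "eventually (\<lambda>j. x j = 0) sequentially" unfolding eventually_sequentially by blast
  qed
  show ?thesis
  proof (cases X)
    case (Ell p)
    have "summable (\<lambda>j. cmod (x j) powr p)"
      by (rule summable_finite[OF \<open>finite F\<close>]) (use assms in auto)
    then show ?thesis using Ell by (simp add: carrier_sp_def)
  next
    case Ell_inf
    have "range x \<subseteq> insert 0 (x ` F)" using assms(2) by auto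
    then have "bounded (range x)"
      using \<open>finite F\<close> by (meson bounded_subset finite_imageI finite_insert finite_imp_bounded)
    then show ?thesis using Ell_inf by (simp add: carrier_sp_def)
  next
    case Conv then show ?thesis using null by (auto simp: carrier_sp_def convergent_def)
  next
    case Null then show ?thesis using null by (simp add: carrier_sp_def)
  qed
qed

lemma bdd_above_norm_carrier_sp:
  assumes "x \<in> carrier_sp X" and "\<forall>p. X \<noteq> Ell p"
  shows "bdd_above (range (\<lambda>j. cmod (x j)))"
proof -
  have "convergent x" if "X = Conv \<or> X = Null"
    using assms(1) that by (auto simp: carrier_sp_def convergent_def)
  then have "bounded (range x)"
    using assms by (cases X) (auto simp: carrier_sp_def Bseq_eq_bounded[symmetric] convergent_imp_Bseq)
  then obtain B where "\<forall>y\<in>range x. norm y \<le> B" by (auto simp: bounded_iff)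
  then show ?thesis by (auto intro!: bdd_aboveI[of _ B])
qed

lemma norm_sp_sup:
  assumes "\<forall>p. X \<noteq> Ell p"
  shows "norm_sp X x = (SUP n. cmod (x n))"
  using assms by (cases X) (auto simp: norm_sp_def)

lemma norm_sp_ge_coordinate:
  assumes "x \<in> carrier_sp X" and "\<forall>p. X \<noteq> Ell p"
  shows "cmod (x j) \<le> norm_sp X x"
  unfolding norm_sp_sup[OF assms(2)]
  by (rule cSUP_upper[OF _ bdd_above_norm_carrier_sp[OF assms]]) simp

lemma norm_sp_nonneg:
  assumes "x \<in> carrier_sp X"
  shows "norm_sp X x \<ge> 0"
proof (cases "\<exists>p. X = Ell p")
  case True then show ?thesis by (auto simp: norm_sp_def)
next
  case False
  then have "cmod (x 0) \<le> norm_sp X x" using norm_sp_ge_coordinate[OF assms] by blast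
  then show ?thesis by (meson norm_ge_zero order_trans)
qed

lemma norm_sp_pos:
  assumes "x \<in> carrier_sp X" and "x j \<noteq> 0"
  shows "norm_sp X x > 0"
proof (cases "\<exists>p. X = Ell p")
  case True
  then obtain p where X: "X = Ell p" by auto
  have "summable (\<lambda>n. cmod (x n) powr p)" using assms(1) X by (simp add: carrier_sp_def)
  then have "0 < (\<Sum>n. cmod (x n) powr p)"
    by (rule suminf_pos2[of _ j]) (use assms(2) in auto)
  then show ?thesis using X by (simp add: norm_sp_def)
next
  case False
  then have "cmod (x j) \<le> norm_sp X x" using norm_sp_ge_coordinate[OF assms(1)] by blast
  then show ?thesis using assms(2) by (meson less_le_trans zero_less_norm_iff)
qed

lemma norm_sp_le_scaled:
  assumes "valid_space X" and "v \<in> carrier_sp X" and "c \<ge> 0"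
    and "\<forall>j. cmod (u j) \<le> c * cmod (v j)"
  shows "norm_sp X u \<le> c * norm_sp X v"
proof (cases "\<exists>p. X = Ell p")
  case True
  then obtain p where X: "X = Ell p" by auto
  have p: "p \<ge> 1" using assms(1) X by (simp add: valid_space_def)
  have sv: "summable (\<lambda>n. cmod (v n) powr p)" using assms(2) X by (simp add: carrier_sp_def)
  have le: "cmod (u j) powr p \<le> c powr p * cmod (v j) powr p" for j
  proof -
    have "cmod (u j) powr p \<le> (c * cmod (v j)) powr p"
      by (rule powr_mono2) (use p assms(4) in auto)
    also have "\<dots> = c powr p * cmod (v j) powr p" by (simp add: powr_mult assms(3))
    finally show ?thesis .
  qed
  have scv: "summable (\<lambda>n. c powr p * cmod (v n) powr p)" using sv by (rule summable_mult)
  have su: "summable (\<lambda>n. cmod (u n) powr p)"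
    by (rule summable_comparison_test[OF _ scv]) (use le in auto)
  have "(\<Sum>n. cmod (u n) powr p) \<le> c powr p * (\<Sum>n. cmod (v n) powr p)"
    using suminf_le[OF le su scv] suminf_mult[OF sv] by simp
  then have "(\<Sum>n. cmod (u n) powr p) powr (1/p) \<le> (c powr p * (\<Sum>n. cmod (v n) powr p)) powr (1/p)"
    by (intro powr_mono2) (use p su in \<open>auto intro: suminf_nonneg\<close>)
  then have "norm_sp X u \<le> (c powr p * (\<Sum>n. cmod (v n) powr p)) powr (1/p)"
    using X by (simp add: norm_sp_def)
  also have "\<dots> = c * norm_sp X v"
    using p assms(3) by (simp add: X norm_sp_def powr_mult powr_powr)
  finally show ?thesis .
next
  case False
  have "cmod (u j) \<le> c * norm_sp X v" for j
    using assms(4) mult_left_mono[OF norm_sp_ge_coordinate[OF assms(2)] assms(3)] False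
    by (meson order_trans)
  then have "(SUP n. cmod (u n)) \<le> c * norm_sp X v" by (intro cSUP_least) auto
  then show ?thesis using norm_sp_sup False by simp
qed

lemma bounded_functional_zero:
  assumes "bounded_functional X k"
  shows "k (\<lambda>j. 0) = 0"
proof -
  have "(\<lambda>j. 0) \<in> carrier_sp X" by (rule carrier_sp_finite_support[of "{}"]) auto
  then have "\<forall>c. k (\<lambda>n. c * 0) = c * k (\<lambda>j. 0)"
    using assms unfolding bounded_functional_def by fastforce
  from this[rule_format, of 0] show ?thesis by simp
qed

lemma bounded_functional_kernel_vector:
  assumes "bounded_functional X k" and "n \<noteq> m"
  obtains y where "y \<in> carrier_sp X" "k y = 0" "\<forall>j. j \<notin> {n, m} \<longrightarrow> y j = 0" "y \<noteq> (\<lambda>j. 0)"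
proof -
  define e where "e = (\<lambda>i j::nat. if j = i then (1::complex) else 0)"
  have e_carrier: "e i \<in> carrier_sp X" for i
    by (rule carrier_sp_finite_support[of "{i}"]) (simp_all add: e_def)
  have add: "\<forall>x\<in>carrier_sp X. \<forall>y\<in>carrier_sp X. k (\<lambda>n. x n + y n) = k x + k y"
    and hom: "\<forall>x\<in>carrier_sp X. \<forall>c. k (\<lambda>n. c * x n) = c * k x"
    using assms(1) unfolding bounded_functional_def by blast+
  \<comment> \<open>\<open>y = k(e\<^sub>m) e\<^sub>n - k(e\<^sub>n) e\<^sub>m\<close>, or \<open>e\<^sub>n\<close> itself when \<open>k(e\<^sub>n) = 0\<close>.\<close>
  define u where "u = (\<lambda>j. k (e m) * e n j)"
  define v where "v = (\<lambda>j. - k (e n) * e m j)"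
  have u_carrier: "u \<in> carrier_sp X" and v_carrier: "v \<in> carrier_sp X"
    by (rule carrier_sp_finite_support[of "{n, m}"]; simp add: u_def v_def e_def)+
  have "k u = k (e m) * k (e n)" using hom e_carrier unfolding u_def by blast
  moreover have "k v = - k (e n) * k (e m)" using hom e_carrier unfolding v_def by blast
  ultimately have "k (\<lambda>j. u j + v j) = 0" using add u_carrier v_carrier by simp
  moreover have "(\<lambda>j. u j + v j) \<in> carrier_sp X"
    by (rule carrier_sp_finite_support[of "{n, m}"]) (simp_all add: u_def v_def e_def)
  moreover have "\<forall>j. j \<notin> {n, m} \<longrightarrow> u j + v j = 0"
    by (simp add: u_def v_def e_def)
  moreover have "(\<lambda>j. u j + v j) \<noteq> (\<lambda>j. 0)" if "k (e n) \<noteq> 0"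
  proof -
    have "u m + v m \<noteq> 0" using assms(2) that by (simp add: u_def v_def e_def)
    then show ?thesis by (auto simp: fun_eq_iff)
  qed
  moreover have "\<forall>j. j \<notin> {n, m} \<longrightarrow> e n j = 0" "e n \<noteq> (\<lambda>j. 0)"
    by (auto simp: e_def fun_eq_iff)
  ultimately show ?thesis
    using that e_carrier[of n] by (cases "k (e n) = 0") blast+
qed

lemma notin_spectrum_op_injective:
  assumes "z \<notin> spectrum_op X T" and "x \<in> carrier_sp X" and "y \<in> carrier_sp X"
    and "(\<lambda>n. T x n - z * x n) = (\<lambda>n. T y n - z * y n)"
  shows "x = y"
proof -
  obtain S where "\<forall>x\<in>carrier_sp X. S (\<lambda>n. T x n - z * x n) = x"
    using assms(1) unfolding spectrum_op_def by blast
  then show ?thesis using assms(2-4) by metis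
qed

lemma notin_spectrum_op_surjective:
  assumes "z \<notin> spectrum_op X T" and "x \<in> carrier_sp X"
  obtains y where "(\<lambda>n. T y n - z * y n) = x"
  using assms unfolding spectrum_op_def by blast

lemma notin_spectrum_op_lower_bound:
  assumes "z \<notin> spectrum_op X T"
  obtains M where "M > 0"
    and "\<And>x. x \<in> carrier_sp X \<Longrightarrow> (\<lambda>n. T x n - z * x n) \<in> carrier_sp X \<Longrightarrow>
               norm_sp X x \<le> M * norm_sp X (\<lambda>n. T x n - z * x n)"
proof -
  obtain S M where "bounded_op X S"
    and inv: "\<forall>x\<in>carrier_sp X. S (\<lambda>n. T x n - z * x n) = x"
    and bound: "\<forall>x\<in>carrier_sp X. norm_sp X (S x) \<le> M * norm_sp X x"
    using assms unfolding spectrum_op_def bounded_op_def by blast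
  show ?thesis
  proof (rule that[of "max M 1"])
    fix x assume x: "x \<in> carrier_sp X" and w: "(\<lambda>n. T x n - z * x n) \<in> carrier_sp X"
    have "norm_sp X x \<le> M * norm_sp X (\<lambda>n. T x n - z * x n)"
      using bound[rule_format, OF w] inv x by simp
    also have "\<dots> \<le> max M 1 * norm_sp X (\<lambda>n. T x n - z * x n)"
      using norm_sp_nonneg[OF w] by (intro mult_right_mono) auto
    finally show "norm_sp X x \<le> max M 1 * norm_sp X (\<lambda>n. T x n - z * x n)" .
  qed simp
qed

lemma T_op_kernel_vector:
  assumes "k y = 0"
  shows "(\<lambda>j. T_op a b k y j - z * y j) = (\<lambda>j. (of_real (a j) - z) * y j)"
  using assms by (simp add: T_op_def diag_op_def fun_eq_iff algebra_simps)

lemma repeated_value_in_spectrum_op: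
  assumes "bounded_functional X k" and "n \<noteq> m" and "a n = a m"
  shows "of_real (a n) \<in> spectrum_op X (T_op a b k)"
proof (rule ccontr)
  assume notin: "of_real (a n) \<notin> spectrum_op X (T_op a b k)"
  obtain y where y: "y \<in> carrier_sp X" "k y = 0" "\<forall>j. j \<notin> {n, m} \<longrightarrow> y j = 0" "y \<noteq> (\<lambda>j. 0)"
    using bounded_functional_kernel_vector[OF assms(1,2)] .
  have zero: "(\<lambda>j. 0) \<in> carrier_sp X" "k (\<lambda>j. 0) = 0"
    using carrier_sp_finite_support[of "{}"] bounded_functional_zero[OF assms(1)] by auto
  have eigen: "(of_real (a j) - of_real (a n)) * y j = 0" for j
    using y(3) assms(3) by (cases "j \<in> {n, m}") auto
  have "(\<lambda>j. T_op a b k y j - of_real (a n) * y j) = (\<lambda>j. 0)"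
    unfolding T_op_kernel_vector[of k y, OF y(2)] fun_eq_iff using eigen by blast
  also have "\<dots> = (\<lambda>j. T_op a b k (\<lambda>j. 0) j - of_real (a n) * 0)"
    using T_op_kernel_vector[of k "\<lambda>j. 0" a b "of_real (a n)", OF zero(2)] by simp
  finally have "y = (\<lambda>j. 0)"
    using notin_spectrum_op_injective[OF notin y(1) zero(1)] by simp
  then show False using y(4) by contradiction
qed

lemma zero_coefficient_in_spectrum_op:
  assumes "b n = 0"
  shows "of_real (a n) \<in> spectrum_op X (T_op a b k)"
proof (rule ccontr)
  assume notin: "of_real (a n) \<notin> spectrum_op X (T_op a b k)"
  define e where "e = (\<lambda>j. if j = n then (1::complex) else 0)"
  have "e \<in> carrier_sp X" by (rule carrier_sp_finite_support[of "{n}"]) (simp_all add: e_def)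
  then obtain y where "(\<lambda>j. T_op a b k y j - of_real (a n) * y j) = e"
    using notin_spectrum_op_surjective[OF notin] by blast
  then have "T_op a b k y n - of_real (a n) * y n = e n" by (rule fun_cong)
  then show False using assms by (simp add: T_op_def diag_op_def e_def)
qed

lemma limit_point_in_spectrum_op:
  assumes "valid_space X" and "bounded_functional X k"
    and "strict_mono g" and "(a \<circ> g) \<longlonglongrightarrow> l"
  shows "of_real l \<in> spectrum_op X (T_op a b k)"
proof (rule ccontr)
  assume notin: "of_real l \<notin> spectrum_op X (T_op a b k)"
  obtain M where M: "M > 0"
    and bound: "\<And>x. x \<in> carrier_sp X \<Longrightarrow> (\<lambda>n. T_op a b k x n - of_real l * x n) \<in> carrier_sp X \<Longrightarrow>
                 norm_sp X x \<le> M * norm_sp X (\<lambda>n. T_op a b k x n - of_real l * x n)"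
    using notin_spectrum_op_lower_bound[OF notin] by blast
  define \<epsilon> where "\<epsilon> = 1 / (2 * M)"
  have "\<epsilon> > 0" using M by (simp add: \<epsilon>_def)
  then obtain i where close: "\<forall>i'\<ge>i. \<bar>a (g i') - l\<bar> < \<epsilon>"
    using assms(4) unfolding LIMSEQ_iff by (auto simp: o_def)
  define n m where "n = g i" and "m = g (Suc i)"
  have "n \<noteq> m" using assms(3) unfolding n_def m_def strict_mono_def by (metis lessI less_irrefl)
  then obtain y where y: "y \<in> carrier_sp X" "k y = 0" "\<forall>j. j \<notin> {n, m} \<longrightarrow> y j = 0" "y \<noteq> (\<lambda>j. 0)"
    using bounded_functional_kernel_vector[OF assms(2)] by blast
  define w where "w = (\<lambda>j. T_op a b k y j - of_real l * y j)"
  have w: "w j = of_real (a j - l) * y j" for j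
    using fun_cong[OF T_op_kernel_vector[of k y, OF y(2)]] by (simp add: w_def)
  have "w \<in> carrier_sp X" by (rule carrier_sp_finite_support[of "{n, m}"]) (use y(3) w in auto)
  then have y_le: "norm_sp X y \<le> M * norm_sp X w" using bound y(1) unfolding w_def by blast
  have "cmod (w j) \<le> \<epsilon> * cmod (y j)" for j
  proof (cases "j \<in> {n, m}")
    case True
    then have "\<bar>a j - l\<bar> < \<epsilon>" using close unfolding n_def m_def by auto
    then show ?thesis unfolding w norm_mult norm_of_real by (simp add: mult_right_mono)
  qed (use y(3) w in simp)
  then have "norm_sp X w \<le> \<epsilon> * norm_sp X y"
    using norm_sp_le_scaled[OF assms(1) y(1)] \<open>\<epsilon> > 0\<close> by simp
  then have "M * norm_sp X w \<le> M * (\<epsilon> * norm_sp X y)" using M by simp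
  then have "norm_sp X y \<le> norm_sp X y / 2" using y_le M by (simp add: \<epsilon>_def)
  moreover obtain j where "y j \<noteq> 0" using y(4) by auto
  ultimately show False using norm_sp_pos[OF y(1), of j] by linarith
qed

lemma positive_limit_point_if_not_null:
  fixes a :: "nat \<Rightarrow> real"
  assumes "bounded (range a)" and "\<forall>n. a n \<ge> 0" and "\<not> a \<longlonglongrightarrow> 0"
  obtains g l where "strict_mono g" "(a \<circ> g) \<longlonglongrightarrow> l" "l > 0"
proof -
  obtain \<delta> where "\<delta> > 0" and frequent: "\<forall>N. \<exists>n\<ge>N. \<not> a n < \<delta>"
    using assms(2,3) unfolding LIMSEQ_iff by (auto simp: abs_of_nonneg)
  define F where "F = {n. a n \<ge> \<delta>}"
  have "infinite F" unfolding infinite_nat_iff_unbounded_le F_def using frequent by (auto simp: not_less)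
  define f where "f = enumerate F"
  have "strict_mono f" using \<open>infinite F\<close> by (simp add: f_def strict_mono_enumerate)
  have large: "a (f i) \<ge> \<delta>" for i
    using enumerate_in_set[OF \<open>infinite F\<close>] by (simp add: f_def F_def)
  have "bounded (range (a \<circ> f))" using assms(1) by (rule bounded_subset) auto
  then obtain l r where "strict_mono r" and lim: "(a \<circ> (f \<circ> r)) \<longlonglongrightarrow> l"
    using bounded_imp_convergent_subsequence by (metis o_assoc)
  have "\<delta> \<le> l" by (rule LIMSEQ_le_const[OF lim]) (use large in auto)
  then show ?thesis
    using that lim \<open>\<delta> > 0\<close> strict_mono_o[OF \<open>strict_mono f\<close> \<open>strict_mono r\<close>] by simp
qed

theorem theorem1:
  fixes X :: seqspace and a :: "nat \<Rightarrow> real" and b :: "nat \<Rightarrow> complex"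
  assumes "valid_space X"
    and "bounded (range a)"
    and "\<forall>n. a n > 0"
    and "b \<in> carrier_sp X"
    and "\<exists>k. bounded_functional X k \<and>
              spectrum_op X (T_op a b k) \<subseteq> {z. Re z \<le> 0}"
  shows "a \<longlonglongrightarrow> 0 \<and> (\<forall>n m. n \<noteq> m \<longrightarrow> a n \<noteq> a m) \<and> (\<forall>n. b n \<noteq> 0)"
proof -
  obtain k where k: "bounded_functional X k"
    and spec: "spectrum_op X (T_op a b k) \<subseteq> {z. Re z \<le> 0}"
    using assms(5) by blast
  have notin: "of_real l \<notin> spectrum_op X (T_op a b k)" if "l > 0" for l
    using spec that by auto
  have "a \<longlonglongrightarrow> 0"
  proof (rule ccontr)
    assume "\<not> a \<longlonglongrightarrow> 0"
    moreover have "\<forall>n. a n \<ge> 0" using assms(3) less_imp_le by blast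
    ultimately obtain g l where "strict_mono g" "(a \<circ> g) \<longlonglongrightarrow> l" "l > 0"
      using positive_limit_point_if_not_null[OF assms(2)] by blast
    then show False using limit_point_in_spectrum_op[OF assms(1) k] notin by blast
  qed
  moreover have "a n \<noteq> a m" if "n \<noteq> m" for n m
    using repeated_value_in_spectrum_op[OF k that] notin assms(3) by blast
  moreover have "b n \<noteq> 0" for n
    using zero_coefficient_in_spectrum_op notin assms(3) by blast
  ultimately show ?thesis by blast
qed

end
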